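(* Let $S$ be an MPD-semigroup in $\mathbb N^d$. Then every Frobenius element of $S$ is a pseudo-Frobenius element of $S$, i.e. $\mathrm{F}(S)\subseteq\mathrm{PF}(S)$.
   Context: $S$ is the submonoid of $\mathbb N^d$ generated by finitely many $\mathbf a_1,\dots,\mathbf a_n$; it is an MPD-semigroup if, for a field $\Bbbk$, $\mathrm{depth}\,\Bbbk[S]=1$ as a module over $\Bbbk[x_1,\dots,x_n]$ via $x_i\mapsto\chi^{\mathbf a_i}$ (i.e. projective dimension $n-1$). $\mathrm{pos}(S)=\{\sum_i\lambda_i\mathbf a_i:\lambda_i\in\mathbb Q_{\ge0}\}$, $\mathcal H(S)=(\mathrm{pos}(S)\setminus S)\cap\mathbb N^d$, $\mathrm{PF}(S)=\{\mathbf a\in\mathcal H(S):\mathbf a+(S\setminus\{0\})\subseteq S\}$. A term order on $\mathbb N^d$ is a total order compatible with addition having $0$ as least element. $\mathbf f\in\mathcal H(S)$ is a Frobenius element of $S$ if $\mathbf f=\max_\prec\mathcal H(S)$ for some term order $\prec$ on $\mathbb N^d$; $\mathrm F(S)$ is the set of Frobenius elements. *)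

theory Defs
  imports Complex_Main "HOL-Library.Poly_Mapping"
begin

text \<open>Points of N^d are finitely supported maps nat to nat with support in {0..<d}.
  The affine semigroup S is generated by a 0, ..., a (n-1).\<close>

definition Nd :: "nat \<Rightarrow> (nat \<Rightarrow>\<^sub>0 nat) set" where
  "Nd d = {v. Poly_Mapping.keys v \<subseteq> {..<d}}"

definition smul_nat :: "nat \<Rightarrow> (nat \<Rightarrow>\<^sub>0 nat) \<Rightarrow> (nat \<Rightarrow>\<^sub>0 nat)" where
  "smul_nat c v = Poly_Mapping.map (\<lambda>x. c * x) v"

definition gen_monoid :: "nat \<Rightarrow> (nat \<Rightarrow> (nat \<Rightarrow>\<^sub>0 nat)) \<Rightarrow> (nat \<Rightarrow>\<^sub>0 nat) set" where
  "gen_monoid n a = {(\<Sum>i<n. smul_nat (c i) (a i)) | c. True}"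

definition in_pos :: "nat \<Rightarrow> (nat \<Rightarrow> (nat \<Rightarrow>\<^sub>0 nat)) \<Rightarrow> (nat \<Rightarrow>\<^sub>0 nat) \<Rightarrow> bool" where
  "in_pos n a v \<longleftrightarrow> (\<exists>lam::nat \<Rightarrow> rat. (\<forall>i<n. lam i \<ge> 0) \<and>
      (\<forall>j. of_nat (Poly_Mapping.lookup v j) = (\<Sum>i<n. lam i * of_nat (Poly_Mapping.lookup (a i) j))))"

definition holes :: "nat \<Rightarrow> nat \<Rightarrow> (nat \<Rightarrow> (nat \<Rightarrow>\<^sub>0 nat)) \<Rightarrow> (nat \<Rightarrow>\<^sub>0 nat) set" where
  "holes d n a = {v \<in> Nd d. in_pos n a v \<and> v \<notin> gen_monoid n a}"

definition pseudo_frobenius :: "nat \<Rightarrow> nat \<Rightarrow> (nat \<Rightarrow> (nat \<Rightarrow>\<^sub>0 nat)) \<Rightarrow> (nat \<Rightarrow>\<^sub>0 nat) set" where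
  "pseudo_frobenius d n a = {f \<in> holes d n a.
      \<forall>s \<in> gen_monoid n a - {0}. f + s \<in> gen_monoid n a}"

definition term_order :: "nat \<Rightarrow> ((nat \<Rightarrow>\<^sub>0 nat) \<Rightarrow> (nat \<Rightarrow>\<^sub>0 nat) \<Rightarrow> bool) \<Rightarrow> bool" where
  "term_order d le \<longleftrightarrow>
     (\<forall>x \<in> Nd d. le x x) \<and>
     (\<forall>x \<in> Nd d. \<forall>y \<in> Nd d. le x y \<and> le y x \<longrightarrow> x = y) \<and>
     (\<forall>x \<in> Nd d. \<forall>y \<in> Nd d. \<forall>z \<in> Nd d. le x y \<and> le y z \<longrightarrow> le x z) \<and>
     (\<forall>x \<in> Nd d. \<forall>y \<in> Nd d. le x y \<or> le y x) \<and>
     (\<forall>x \<in> Nd d. \<forall>y \<in> Nd d. \<forall>z \<in> Nd d. le x y \<longrightarrow> le (x + z) (y + z)) \<and>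
     (\<forall>x \<in> Nd d. le 0 x)"

definition frobenius_elements :: "nat \<Rightarrow> nat \<Rightarrow> (nat \<Rightarrow> (nat \<Rightarrow>\<^sub>0 nat)) \<Rightarrow> (nat \<Rightarrow>\<^sub>0 nat) set" where
  "frobenius_elements d n a = {f \<in> holes d n a.
      \<exists>le. term_order d le \<and> (\<forall>h \<in> holes d n a. le h f)}"

text \<open>The polynomial ring k[x_0,...,x_(n-1)] (as polynomials in the variables below n),
  its homogeneous maximal ideal, and the semigroup ring k[S] (finitely supported maps
  with support in S) as a module via x_i acting as chi^(a i).\<close>

definition poly_ring :: "nat \<Rightarrow> ((nat \<Rightarrow>\<^sub>0 nat) \<Rightarrow>\<^sub>0 'k::field) set" where
  "poly_ring n = {p. \<forall>\<alpha> \<in> Poly_Mapping.keys p. Poly_Mapping.keys \<alpha> \<subseteq> {..<n}}"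

definition max_ideal :: "nat \<Rightarrow> ((nat \<Rightarrow>\<^sub>0 nat) \<Rightarrow>\<^sub>0 'k::field) set" where
  "max_ideal n = {p \<in> poly_ring n. Poly_Mapping.lookup p 0 = 0}"

definition semigroup_ring :: "nat \<Rightarrow> (nat \<Rightarrow> (nat \<Rightarrow>\<^sub>0 nat)) \<Rightarrow> ((nat \<Rightarrow>\<^sub>0 nat) \<Rightarrow>\<^sub>0 'k::field) set" where
  "semigroup_ring n a = {m. Poly_Mapping.keys m \<subseteq> gen_monoid n a}"

definition expmap :: "nat \<Rightarrow> (nat \<Rightarrow> (nat \<Rightarrow>\<^sub>0 nat)) \<Rightarrow> (nat \<Rightarrow>\<^sub>0 nat) \<Rightarrow> (nat \<Rightarrow>\<^sub>0 nat)" where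
  "expmap n a \<alpha> = (\<Sum>i<n. smul_nat (Poly_Mapping.lookup \<alpha> i) (a i))"

definition act :: "nat \<Rightarrow> (nat \<Rightarrow> (nat \<Rightarrow>\<^sub>0 nat)) \<Rightarrow> ((nat \<Rightarrow>\<^sub>0 nat) \<Rightarrow>\<^sub>0 'k::field)
    \<Rightarrow> ((nat \<Rightarrow>\<^sub>0 nat) \<Rightarrow>\<^sub>0 'k) \<Rightarrow> ((nat \<Rightarrow>\<^sub>0 nat) \<Rightarrow>\<^sub>0 'k)" where
  "act n a p m = (\<Sum>(\<alpha>, s) \<in> Poly_Mapping.keys p \<times> Poly_Mapping.keys m.
      Poly_Mapping.single (s + expmap n a \<alpha>) (Poly_Mapping.lookup p \<alpha> * Poly_Mapping.lookup m s))"

definition ideal_module :: "nat \<Rightarrow> (nat \<Rightarrow> (nat \<Rightarrow>\<^sub>0 nat)) \<Rightarrow> ((nat \<Rightarrow>\<^sub>0 nat) \<Rightarrow>\<^sub>0 'k::field) list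
    \<Rightarrow> ((nat \<Rightarrow>\<^sub>0 nat) \<Rightarrow>\<^sub>0 'k) set" where
  "ideal_module n a fs = {(\<Sum>j<length fs. act n a (fs ! j) (ms j)) | ms.
      \<forall>j<length fs. ms j \<in> semigroup_ring n a}"

definition regular_seq :: "nat \<Rightarrow> (nat \<Rightarrow> (nat \<Rightarrow>\<^sub>0 nat)) \<Rightarrow> ((nat \<Rightarrow>\<^sub>0 nat) \<Rightarrow>\<^sub>0 'k::field) list \<Rightarrow> bool" where
  "regular_seq n a fs \<longleftrightarrow> set fs \<subseteq> max_ideal n \<and>
     (\<forall>i < length fs. \<forall>m \<in> semigroup_ring n a.
        act n a (fs ! i) m \<in> ideal_module n a (take i fs) \<longrightarrow> m \<in> ideal_module n a (take i fs)) \<and>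
     semigroup_ring n a \<noteq> ideal_module n a fs"

definition depth_semigroup_ring :: "'k::field itself \<Rightarrow> nat \<Rightarrow> (nat \<Rightarrow> (nat \<Rightarrow>\<^sub>0 nat)) \<Rightarrow> nat" where
  "depth_semigroup_ring _ n a = Sup (length ` {fs :: ((nat \<Rightarrow>\<^sub>0 nat) \<Rightarrow>\<^sub>0 'k) list. regular_seq n a fs})"

definition MPD_semigroup :: "'k::field itself \<Rightarrow> nat \<Rightarrow> nat \<Rightarrow> (nat \<Rightarrow> (nat \<Rightarrow>\<^sub>0 nat)) \<Rightarrow> bool" where
  "MPD_semigroup K d n a \<longleftrightarrow> (\<forall>i<n. a i \<in> Nd d) \<and> depth_semigroup_ring K n a = 1"

end

theory Submission
  imports Defs
begin

text \<open>If \<open>f\<close> is the \<open>\<preceq>\<close>-largest hole and \<open>s \<in> S \<setminus> {0}\<close>, then \<open>f + s\<close> still lies in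
  \<open>pos(S)\<close>, and \<open>f \<prec> f + s\<close> because a term order is compatible with addition and has
  \<open>0\<close> as least element; so \<open>f + s\<close> cannot be a hole and must lie in \<open>S\<close>.\<close>

lemma lookup_smul_nat: "Poly_Mapping.lookup (smul_nat c v) j = c * Poly_Mapping.lookup v j"
  unfolding smul_nat_def by (simp add: Poly_Mapping.map.rep_eq when_def)

lemma lookup_sum_smul_nat:
  "Poly_Mapping.lookup (\<Sum>i<n. smul_nat (c i) (a i)) j = (\<Sum>i<n. c i * Poly_Mapping.lookup (a i) j)"
  by (simp add: lookup_sum lookup_smul_nat)

lemma Nd_iff: "v \<in> Nd d \<longleftrightarrow> (\<forall>j\<ge>d. Poly_Mapping.lookup v j = 0)"
  unfolding Nd_def by (auto simp: in_keys_iff) (metis gr_implies_not0 not_less)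

lemma zero_in_Nd: "0 \<in> Nd d"
  by (simp add: Nd_iff)

lemma add_in_Nd: "u \<in> Nd d \<Longrightarrow> v \<in> Nd d \<Longrightarrow> u + v \<in> Nd d"
  by (simp add: Nd_iff lookup_add)

lemma gen_monoid_subset_Nd:
  assumes "\<forall>i<n. a i \<in> Nd d"
  shows "gen_monoid n a \<subseteq> Nd d"
  using assms unfolding gen_monoid_def by (auto simp: Nd_iff lookup_sum_smul_nat)

lemma in_pos_add_gen_monoid:
  assumes "in_pos n a v" and "s \<in> gen_monoid n a"
  shows "in_pos n a (v + s)"
proof -
  obtain c where s: "s = (\<Sum>i<n. smul_nat (c i) (a i))"
    using assms(2) unfolding gen_monoid_def by blast
  obtain lam :: "nat \<Rightarrow> rat" where lam_nonneg: "\<forall>i<n. lam i \<ge> 0" and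
    v: "\<forall>j. of_nat (Poly_Mapping.lookup v j) = (\<Sum>i<n. lam i * of_nat (Poly_Mapping.lookup (a i) j))"
    using assms(1) unfolding in_pos_def by blast
  show ?thesis
    unfolding in_pos_def
  proof (intro exI[of _ "\<lambda>i. lam i + of_nat (c i)"] conjI allI impI)
    show "0 \<le> lam i + of_nat (c i)" if "i < n" for i
      using lam_nonneg that by simp
    show "of_nat (Poly_Mapping.lookup (v + s) j)
        = (\<Sum>i<n. (lam i + of_nat (c i)) * of_nat (Poly_Mapping.lookup (a i) j))" for j
      using v unfolding lookup_add s lookup_sum_smul_nat by (simp add: distrib_right sum.distrib)
  qed
qed

lemma add_gen_monoid_in_holes:
  assumes "\<forall>i<n. a i \<in> Nd d" and "h \<in> holes d n a" and "s \<in> gen_monoid n a"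
    and "h + s \<notin> gen_monoid n a"
  shows "h + s \<in> holes d n a"
  using assms gen_monoid_subset_Nd[OF assms(1)] in_pos_add_gen_monoid add_in_Nd
  unfolding holes_def by blast

lemma term_order_le_add:
  assumes "term_order d le" and "x \<in> Nd d" and "s \<in> Nd d"
  shows "le x (x + s)"
proof -
  have "le (0 + x) (s + x)"
    using assms zero_in_Nd unfolding term_order_def by blast
  then show ?thesis
    by (simp add: add.commute)
qed

lemma term_order_antisym:
  "term_order d le \<Longrightarrow> x \<in> Nd d \<Longrightarrow> y \<in> Nd d \<Longrightarrow> le x y \<Longrightarrow> le y x \<Longrightarrow> x = y"
  unfolding term_order_def by blast

lemma frobenius_elements_subset_pseudo_frobenius:
  assumes gens: "\<forall>i<n. a i \<in> Nd d"
  shows "frobenius_elements d n a \<subseteq> pseudo_frobenius d n a"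
proof
  fix f
  assume "f \<in> frobenius_elements d n a"
  then obtain le where f_hole: "f \<in> holes d n a" and order: "term_order d le"
    and f_max: "\<forall>h \<in> holes d n a. le h f"
    unfolding frobenius_elements_def by blast
  have f_Nd: "f \<in> Nd d"
    using f_hole unfolding holes_def by blast
  have "f + s \<in> gen_monoid n a" if s: "s \<in> gen_monoid n a" "s \<noteq> 0" for s
  proof (rule ccontr)
    assume "f + s \<notin> gen_monoid n a"
    then have "le (f + s) f"
      using f_max add_gen_monoid_in_holes[OF gens f_hole s(1)] by blast
    moreover have "s \<in> Nd d"
      using gen_monoid_subset_Nd[OF gens] s(1) by blast
    ultimately have "f = f + s"
      using term_order_antisym[OF order] term_order_le_add[OF order f_Nd] f_Nd add_in_Nd
      by blast
    then show False
      using s(2) by simp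
  qed
  then show "f \<in> pseudo_frobenius d n a"
    using f_hole unfolding pseudo_frobenius_def by blast
qed

theorem lemma3p2:
  fixes d n :: nat and a :: "nat \<Rightarrow> (nat \<Rightarrow>\<^sub>0 nat)"
  assumes "\<forall>i<n. a i \<in> Nd d"
    and "MPD_semigroup TYPE('k::field) d n a"
  shows "frobenius_elements d n a \<subseteq> pseudo_frobenius d n a"
  using frobenius_elements_subset_pseudo_frobenius[OF assms(1)] .

end
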